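(* For $N\ge 5$, let $\mathrm{Cir}^4_N$ be the graph on vertices $1,\dots,N$ arranged in a cycle, in which each vertex is adjacent to the 2 nearest vertices clockwise and the 2 nearest counter-clockwise, and let $\mathrm{Cir}^2_N$ be the cycle graph on the same vertices in the same cyclic order. Then \[ 0.138<\liminf_{N\to\infty}\rho(\mathrm{Cir}^4_N,\mathrm{Cir}^2_N)\le\limsup_{N\to\infty}\rho(\mathrm{Cir}^4_N,\mathrm{Cir}^2_N)<0.34. \]
   Context: Moran Birth-death process on two graphs (neutral case): $G^A$ and $G^B$ are connected undirected simple graphs on the same vertex set $\{1,\dots,N\}$. Every vertex is occupied by exactly one individual, of type $A$ (mutant) or type $B$ (resident). In each discrete time step, one individual is chosen uniformly at random among all $N$ individuals to reproduce; its offspring (of the same type) replaces the individual at a vertex chosen uniformly at random among the neighbors of the parent's vertex, where neighbors are taken in $G^A$ if the parent is of type $A$ and in $G^B$ if the parent is of type $B$. The all-$A$ and all-$B$ states are absorbing. The fixation probability $\rho(G^A,G^B)$ is the probability that the process reaches the all-$A$ state when started from exactly one type-$A$ individual at a uniformly random vertex, all other vertices of type $B$. *)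

theory Defs
  imports "HOL-Probability.Probability" "HOL-Library.Liminf_Limsup"
begin

text \<open>Graphs on the vertex set {0..<N} (the paper's vertices 1..N, relabelled),
given by a symmetric irreflexive adjacency relation.\<close>

definition nbrs :: "nat \<Rightarrow> (nat \<Rightarrow> nat \<Rightarrow> bool) \<Rightarrow> nat \<Rightarrow> nat set" where
  "nbrs N E u = {w. w < N \<and> E u w}"

text \<open>One step of the neutral Moran Birth-death process on the pair (G^A, G^B).
A state is the set of vertices occupied by type A (mutants).\<close>

definition moran_step ::
  "nat \<Rightarrow> (nat \<Rightarrow> nat \<Rightarrow> bool) \<Rightarrow> (nat \<Rightarrow> nat \<Rightarrow> bool) \<Rightarrow> nat set \<Rightarrow> nat set pmf" where
  "moran_step N EA EB S =
     bind_pmf (pmf_of_set {..<N}) (\<lambda>u.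
       if u \<in> S then map_pmf (\<lambda>w. insert w S) (pmf_of_set (nbrs N EA u))
       else map_pmf (\<lambda>w. S - {w}) (pmf_of_set (nbrs N EB u)))"

definition moran_dist ::
  "nat \<Rightarrow> (nat \<Rightarrow> nat \<Rightarrow> bool) \<Rightarrow> (nat \<Rightarrow> nat \<Rightarrow> bool) \<Rightarrow> nat \<Rightarrow> nat set \<Rightarrow> nat set pmf" where
  "moran_dist N EA EB n S0 = ((\<lambda>p. bind_pmf p (moran_step N EA EB)) ^^ n) (return_pmf S0)"

text \<open>Probability of ever reaching the all-A state (absorbing), i.e. the supremum
over n of the probability of being in the all-A state at time n.\<close>

definition fixation_prob_from ::
  "nat \<Rightarrow> (nat \<Rightarrow> nat \<Rightarrow> bool) \<Rightarrow> (nat \<Rightarrow> nat \<Rightarrow> bool) \<Rightarrow> nat set \<Rightarrow> real" where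
  "fixation_prob_from N EA EB S0 = (SUP n. pmf (moran_dist N EA EB n S0) {..<N})"

text \<open>rho(G^A, G^B): start from a single mutant at a uniformly random vertex.\<close>

definition fixation_prob ::
  "nat \<Rightarrow> (nat \<Rightarrow> nat \<Rightarrow> bool) \<Rightarrow> (nat \<Rightarrow> nat \<Rightarrow> bool) \<Rightarrow> real" where
  "fixation_prob N EA EB = (\<Sum>v<N. fixation_prob_from N EA EB {v}) / real N"

text \<open>Circulant graph Cir^k_N on {0..<N} in cyclic order: u, v adjacent iff
they are distinct and at cyclic distance at most k/2.\<close>

definition cir :: "nat \<Rightarrow> nat \<Rightarrow> nat \<Rightarrow> nat \<Rightarrow> bool" where
  "cir N k u v = (u \<noteq> v \<and>
     (let d = (int u - int v) mod int N in d \<le> int (k div 2) \<or> int N - d \<le> int (k div 2)))"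

end

theory Submission
  imports Defs
begin

text \<open>
  Read a configuration as a periodic 0/1 sequence x along the cycle. For a positive weight w on
  triples of consecutive sites, the product of w over all N cyclic windows changes, when site j
  flips, by a factor depending only on x(j-2), ..., x(j+2). So the one-step drift of such a product
  is the product itself times a sum of local terms, one per site; if each local term is bounded by
  phi(b,c,d,e) - phi(a,b,c,d) for a potential phi on four sites, the sum telescopes around the
  cycle and its sign is known. Three rational certificates of this kind give a supermartingale G
  with G(empty) = 1 and G({v}) = 0.92 * 0.93, a submartingale H \<le> 1 with H({v}) = 0.7 and
  H(all) = 0.6^N, and a bounded Lyapunov function whose drift is at least 1/(6N) whenever both types
  are present, which forces absorption. Comparing expectations at time n with the initial values
  gives 1 - 0.92 * 0.93 \<le> rho \<le> 0.3 / (1 - 0.6^N) from every starting vertex.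
\<close>

section \<open>The Moran chain on a pair of graphs\<close>

definition toggle :: "nat set \<Rightarrow> nat \<Rightarrow> nat set" where
  "toggle S j = (if j \<in> S then S - {j} else insert j S)"

definition offspring_nbrs ::
  "nat \<Rightarrow> (nat \<Rightarrow> nat \<Rightarrow> bool) \<Rightarrow> (nat \<Rightarrow> nat \<Rightarrow> bool) \<Rightarrow> nat set \<Rightarrow> nat \<Rightarrow> nat set" where
  "offspring_nbrs N EA EB S u = (if u \<in> S then nbrs N EA u else nbrs N EB u)"

text \<open>N times the probability that the next step changes the type of vertex w.\<close>

definition flip_rate ::
  "nat \<Rightarrow> (nat \<Rightarrow> nat \<Rightarrow> bool) \<Rightarrow> (nat \<Rightarrow> nat \<Rightarrow> bool) \<Rightarrow> nat set \<Rightarrow> nat \<Rightarrow> real" where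
  "flip_rate N EA EB S w = (\<Sum>u<N. of_bool ((u \<in> S) \<noteq> (w \<in> S) \<and> w \<in> offspring_nbrs N EA EB S u)
                                  / card (offspring_nbrs N EA EB S u))"

lemma finite_nbrs [simp]: "finite (nbrs N E u)"
  by (simp add: nbrs_def)

lemma nbrs_subset: "nbrs N E u \<subseteq> {..<N}"
  by (auto simp: nbrs_def)

locale moran_chain =
  fixes N :: nat and EA EB :: "nat \<Rightarrow> nat \<Rightarrow> bool"
  assumes N_pos: "0 < N"
    and nbrs_A_nonempty: "\<And>u. u < N \<Longrightarrow> nbrs N EA u \<noteq> {}"
    and nbrs_B_nonempty: "\<And>u. u < N \<Longrightarrow> nbrs N EB u \<noteq> {}"
begin

abbreviation step :: "nat set \<Rightarrow> nat set pmf" where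
  "step \<equiv> moran_step N EA EB"

abbreviation dist :: "nat \<Rightarrow> nat set \<Rightarrow> nat set pmf" where
  "dist n S0 \<equiv> moran_dist N EA EB n S0"

lemma offspring_nbrs_nonempty: "u < N \<Longrightarrow> offspring_nbrs N EA EB S u \<noteq> {}"
  by (simp add: offspring_nbrs_def nbrs_A_nonempty nbrs_B_nonempty)

lemma finite_offspring_nbrs [simp]: "finite (offspring_nbrs N EA EB S u)"
  by (simp add: offspring_nbrs_def)

lemma set_pmf_offspring:
  "u < N \<Longrightarrow> set_pmf (pmf_of_set (offspring_nbrs N EA EB S u)) = offspring_nbrs N EA EB S u"
  using offspring_nbrs_nonempty by (auto simp: offspring_nbrs_def)

lemma step_offspring:
  "step S = pmf_of_set {..<N} \<bind>
     (\<lambda>u. map_pmf (\<lambda>w. if u \<in> S then insert w S else S - {w}) (pmf_of_set (offspring_nbrs N EA EB S u)))"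
  unfolding moran_step_def offspring_nbrs_def by (intro bind_pmf_cong) auto

lemma set_pmf_step: "S \<subseteq> {..<N} \<Longrightarrow> set_pmf (step S) \<subseteq> Pow {..<N}"
proof -
  assume S: "S \<subseteq> {..<N}"
  have "set_pmf (step S) = (\<Union>u<N. (\<lambda>w. if u \<in> S then insert w S else S - {w}) ` offspring_nbrs N EA EB S u)"
    using N_pos by (simp add: step_offspring set_pmf_offspring lessThan_empty_iff cong: SUP_cong_simp)
  then show ?thesis using S by (auto simp: offspring_nbrs_def nbrs_def split: if_splits)
qed

lemma finite_set_pmf_step: "S \<subseteq> {..<N} \<Longrightarrow> finite (set_pmf (step S))"
  by (meson finite_Pow_iff finite_lessThan finite_subset set_pmf_step)

lemma expectation_step_const_diff:
  fixes f :: "nat set \<Rightarrow> real"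
  assumes "S \<subseteq> {..<N}"
  shows "measure_pmf.expectation (step S) (\<lambda>T. c - f T) = c - measure_pmf.expectation (step S) f"
proof -
  have "integrable (measure_pmf (step S)) f"
    by (rule integrable_measure_pmf_finite[OF finite_set_pmf_step[OF assms]])
  then show ?thesis by simp
qed

lemma expectation_offspring:
  assumes "u < N"
  shows "measure_pmf.expectation
      (map_pmf (\<lambda>w. if u \<in> S then insert w S else S - {w}) (pmf_of_set (offspring_nbrs N EA EB S u))) f
    = f S + (\<Sum>w<N. of_bool ((u \<in> S) \<noteq> (w \<in> S) \<and> w \<in> offspring_nbrs N EA EB S u)
        / card (offspring_nbrs N EA EB S u) * (f (toggle S w) - f S))"
proof -
  let ?D = "offspring_nbrs N EA EB S u"
  have ne: "?D \<noteq> {}" using offspring_nbrs_nonempty[OF assms] .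
  then have card: "card ?D > 0" by (simp add: card_gt_0_iff)
  have offspring: "f (if u \<in> S then insert w S else S - {w})
      = f S + of_bool ((u \<in> S) \<noteq> (w \<in> S)) * (f (toggle S w) - f S)" for w
    by (auto simp: toggle_def insert_absorb)
  have "measure_pmf.expectation (map_pmf (\<lambda>w. if u \<in> S then insert w S else S - {w}) (pmf_of_set ?D)) f
      = (\<Sum>w\<in>?D. f S + of_bool ((u \<in> S) \<noteq> (w \<in> S)) * (f (toggle S w) - f S)) / card ?D"
    using ne by (simp add: integral_pmf_of_set offspring)
  also have "\<dots> = f S + (\<Sum>w\<in>?D. of_bool ((u \<in> S) \<noteq> (w \<in> S)) * (f (toggle S w) - f S)) / card ?D"
    using card ne by (simp add: sum.distrib add_divide_distrib)
  also have "(\<Sum>w\<in>?D. of_bool ((u \<in> S) \<noteq> (w \<in> S)) * (f (toggle S w) - f S))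
      = (\<Sum>w<N. of_bool ((u \<in> S) \<noteq> (w \<in> S) \<and> w \<in> ?D) * (f (toggle S w) - f S))"
    using nbrs_subset by (intro sum.mono_neutral_cong_left) (auto simp: offspring_nbrs_def)
  also have "\<dots> / card ?D = (\<Sum>w<N. of_bool ((u \<in> S) \<noteq> (w \<in> S) \<and> w \<in> ?D) / card ?D * (f (toggle S w) - f S))"
    unfolding sum_divide_distrib by simp
  finally show ?thesis .
qed

lemma expectation_step:
  "measure_pmf.expectation (step S) f
     = f S + (\<Sum>w<N. flip_rate N EA EB S w * (f (toggle S w) - f S)) / N"
proof -
  define a where "a u w = of_bool ((u \<in> S) \<noteq> (w \<in> S) \<and> w \<in> offspring_nbrs N EA EB S u)
    / card (offspring_nbrs N EA EB S u)" for u w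
  have "measure_pmf.expectation (step S) f = (\<Sum>u<N. measure_pmf.expectation (map_pmf
      (\<lambda>w. if u \<in> S then insert w S else S - {w}) (pmf_of_set (offspring_nbrs N EA EB S u))) f / N)"
    unfolding step_offspring using N_pos
    by (subst pmf_expectation_bind_pmf_of_set) (auto simp: set_pmf_offspring divide_inverse_commute)
  also have "\<dots> = (\<Sum>u<N. (f S + (\<Sum>w<N. a u w * (f (toggle S w) - f S))) / N)"
    by (rule sum.cong[OF refl]) (subst expectation_offspring; simp add: a_def)
  also have "\<dots> = f S + (\<Sum>u<N. \<Sum>w<N. a u w * (f (toggle S w) - f S)) / N"
    using N_pos by (simp add: sum.distrib add_divide_distrib sum_divide_distrib[symmetric])
  also have "(\<Sum>u<N. \<Sum>w<N. a u w * (f (toggle S w) - f S)) = (\<Sum>w<N. (\<Sum>u<N. a u w) * (f (toggle S w) - f S))"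
    by (subst sum.swap) (simp add: sum_distrib_right)
  finally show ?thesis by (simp add: a_def flip_rate_def)
qed

lemma dist_0: "dist 0 S0 = return_pmf S0"
  by (simp add: moran_dist_def)

lemma dist_Suc: "dist (Suc n) S0 = dist n S0 \<bind> step"
  by (simp add: moran_dist_def)

lemma set_pmf_dist: "S0 \<subseteq> {..<N} \<Longrightarrow> set_pmf (dist n S0) \<subseteq> Pow {..<N}"
proof (induction n)
  case (Suc n)
  then show ?case unfolding dist_Suc set_bind_pmf using set_pmf_step by (intro UN_least) blast
qed (simp add: dist_0)

definition expect :: "nat \<Rightarrow> nat set \<Rightarrow> (nat set \<Rightarrow> real) \<Rightarrow> real" where
  "expect n S0 f = measure_pmf.expectation (dist n S0) f"

context
  fixes S0 assumes S0: "S0 \<subseteq> {..<N}"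
begin

lemma expect_eq_sum: "expect n S0 f = (\<Sum>S\<in>Pow {..<N}. pmf (dist n S0) S * f S)"
  unfolding expect_def using set_pmf_dist[OF S0]
  by (subst integral_measure_pmf_real[of "Pow {..<N}"]) (auto simp: mult.commute)

lemma expect_0: "expect 0 S0 f = f S0"
  by (simp add: expect_def dist_0)

lemma expect_Suc: "expect (Suc n) S0 f = expect n S0 (\<lambda>S. measure_pmf.expectation (step S) f)"
  unfolding expect_def dist_Suc using set_pmf_dist[OF S0] finite_set_pmf_step
  by (subst pmf_expectation_bind[of "Pow {..<N}"], auto intro: finite_subset)
    (auto simp: expect_eq_sum[unfolded expect_def] mult.commute)

lemma expect_mono: "(\<And>S. S \<subseteq> {..<N} \<Longrightarrow> f S \<le> g S) \<Longrightarrow> expect n S0 f \<le> expect n S0 g"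
  unfolding expect_eq_sum by (intro sum_mono mult_left_mono) auto

lemma expect_add: "expect n S0 (\<lambda>S. f S + g S) = expect n S0 f + expect n S0 g"
  unfolding expect_eq_sum by (simp add: sum.distrib distrib_left)

lemma expect_diff: "expect n S0 (\<lambda>S. f S - g S) = expect n S0 f - expect n S0 g"
  unfolding expect_eq_sum by (simp add: sum_subtractf right_diff_distrib)

lemma expect_scale: "expect n S0 (\<lambda>S. c * f S) = c * expect n S0 f"
  unfolding expect_eq_sum by (simp add: sum_distrib_left algebra_simps)

lemma expect_const: "expect n S0 (\<lambda>S. c) = c"
  unfolding expect_def by simp

lemma expect_indicator_full: "expect n S0 (\<lambda>S. of_bool (S = {..<N})) = pmf (dist n S0) {..<N}"
  unfolding expect_eq_sum by (simp add: of_bool_def if_distrib sum.delta cong: if_cong)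

lemma expect_drift:
  assumes "\<And>S. S \<subseteq> {..<N} \<Longrightarrow> f S + c S \<le> measure_pmf.expectation (step S) f"
  shows "f S0 + (\<Sum>k<n. expect k S0 c) \<le> expect n S0 f"
proof (induction n)
  case 0
  show ?case by (simp add: expect_0)
next
  case (Suc n)
  have "f S0 + (\<Sum>k<Suc n. expect k S0 c) \<le> expect n S0 f + expect n S0 c"
    using Suc by simp
  also have "\<dots> \<le> expect (Suc n) S0 f"
    unfolding expect_Suc expect_add[symmetric] by (rule expect_mono) (rule assms)
  finally show ?case .
qed

lemma expect_submartingale:
  "(\<And>S. S \<subseteq> {..<N} \<Longrightarrow> f S \<le> measure_pmf.expectation (step S) f) \<Longrightarrow> f S0 \<le> expect n S0 f"
  using expect_drift[of f "\<lambda>_. 0" n] by (simp add: expect_const)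

end

lemma fixation_prob_from_le:
  assumes S0: "S0 \<subseteq> {..<N}"
    and submart: "\<And>S. S \<subseteq> {..<N} \<Longrightarrow> H S \<le> measure_pmf.expectation (step S) H"
    and le_1: "\<And>S. S \<subseteq> {..<N} \<Longrightarrow> H S \<le> 1" and full: "H {..<N} < 1"
  shows "fixation_prob_from N EA EB S0 \<le> (1 - H S0) / (1 - H {..<N})"
  unfolding fixation_prob_from_def
proof (rule cSUP_least)
  fix n
  have "(1 - H {..<N}) * pmf (dist n S0) {..<N} = expect n S0 (\<lambda>S. (1 - H {..<N}) * of_bool (S = {..<N}))"
    by (simp add: expect_scale[OF S0] expect_indicator_full[OF S0])
  also have "\<dots> \<le> expect n S0 (\<lambda>S. 1 - H S)"
    using le_1 full by (intro expect_mono[OF S0]) auto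
  also have "\<dots> \<le> 1 - H S0"
    using expect_submartingale[OF S0 submart, of n] by (simp add: expect_diff[OF S0] expect_const[OF S0])
  finally show "pmf (dist n S0) {..<N} \<le> (1 - H S0) / (1 - H {..<N})"
    using full by (simp add: field_simps)
qed simp

abbreviation transient :: "nat set \<Rightarrow> real" where
  "transient S \<equiv> of_bool (S \<noteq> {} \<and> S \<noteq> {..<N})"

text \<open>The expected total time spent in transient states is at most B / \<delta>.\<close>

lemma transient_prob_vanishes:
  assumes S0: "S0 \<subseteq> {..<N}"
    and drift: "\<And>S. S \<subseteq> {..<N} \<Longrightarrow> V S + \<delta> * transient S \<le> measure_pmf.expectation (step S) V"
    and bounded: "\<And>S. S \<subseteq> {..<N} \<Longrightarrow> 0 \<le> V S \<and> V S \<le> B"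
    and "\<delta> > 0" "\<epsilon> > 0"
  shows "\<exists>n. expect n S0 transient < \<epsilon>"
proof (rule ccontr)
  assume "\<nexists>n. expect n S0 transient < \<epsilon>"
  then have large: "\<epsilon> \<le> expect n S0 transient" for n by (simp add: not_less)
  obtain n :: nat where n: "B / (\<delta> * \<epsilon>) < n" using reals_Archimedean2 by blast
  have "real n * (\<delta> * \<epsilon>) = (\<Sum>k<n. \<delta> * \<epsilon>)" by simp
  also have "\<dots> \<le> (\<Sum>k<n. expect k S0 (\<lambda>S. \<delta> * transient S))"
    using \<open>\<delta> > 0\<close> large by (intro sum_mono) (simp add: expect_scale[OF S0])
  also have "\<dots> \<le> expect n S0 V - V S0"
    using expect_drift[OF S0 drift, of n] by simp
  also have "\<dots> \<le> B"
    using bounded[OF S0] expect_mono[OF S0, of V "\<lambda>_. B" n] bounded by (simp add: expect_const[OF S0])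
  finally show False using n \<open>\<delta> > 0\<close> \<open>\<epsilon> > 0\<close> by (simp add: field_simps)
qed

lemma fixation_prob_from_ge:
  assumes S0: "S0 \<subseteq> {..<N}"
    and supermart: "\<And>S. S \<subseteq> {..<N} \<Longrightarrow> measure_pmf.expectation (step S) G \<le> G S"
    and nonneg: "\<And>S. S \<subseteq> {..<N} \<Longrightarrow> 0 \<le> G S" and empty: "G {} = 1"
    and absorbed: "\<And>\<epsilon>. \<epsilon> > 0 \<Longrightarrow> \<exists>n. expect n S0 transient < \<epsilon>"
  shows "1 - G S0 \<le> fixation_prob_from N EA EB S0"
proof (rule field_le_epsilon)
  fix \<epsilon> :: real assume "\<epsilon> > 0"
  then obtain n where n: "expect n S0 transient < \<epsilon>" using absorbed by blast
  have bdd: "bdd_above (range (\<lambda>n. pmf (dist n S0) {..<N}))"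
    by (rule bdd_aboveI[of _ 1]) (auto simp: pmf_le_1)
  have "1 - G S0 \<le> expect n S0 (\<lambda>S. 1 - G S)"
    using supermart by (intro expect_submartingale[OF S0]) (simp add: expectation_step_const_diff)
  also have "\<dots> \<le> expect n S0 (\<lambda>S. of_bool (S = {..<N}) + transient S)"
    using nonneg empty by (intro expect_mono[OF S0]) force
  also have "\<dots> = pmf (dist n S0) {..<N} + expect n S0 transient"
    by (simp add: expect_add[OF S0] expect_indicator_full[OF S0])
  also have "pmf (dist n S0) {..<N} \<le> fixation_prob_from N EA EB S0"
    unfolding fixation_prob_from_def by (rule cSUP_upper[OF _ bdd]) simp
  finally show "1 - G S0 \<le> fixation_prob_from N EA EB S0 + \<epsilon>" using n by simp
qed

end

section \<open>Circulant graphs\<close>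

definition cyc :: "nat \<Rightarrow> int \<Rightarrow> nat" where
  "cyc N i = nat (i mod int N)"

definition occ :: "nat \<Rightarrow> nat set \<Rightarrow> int \<Rightarrow> bool" where
  "occ N S i = (cyc N i \<in> S)"

lemma int_cyc: "N > 0 \<Longrightarrow> int (cyc N i) = i mod int N"
  by (simp add: cyc_def)

lemma cyc_less: "N > 0 \<Longrightarrow> cyc N i < N"
  by (simp add: cyc_def nat_less_iff)

lemma cyc_of_nat [simp]: "j < N \<Longrightarrow> cyc N (int j) = j"
  by (simp add: cyc_def)

lemma cyc_eq_iff: "N > 0 \<Longrightarrow> cyc N i = cyc N i' \<longleftrightarrow> int N dvd i - i'"
  by (metis int_cyc mod_eq_dvd_iff of_nat_eq_iff)

lemma cyc_eq_of_nat_iff: "j < N \<Longrightarrow> cyc N i = j \<longleftrightarrow> int N dvd i - int j"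
  using cyc_eq_iff[of N i "int j"] by simp

lemma occ_add_period: "occ N S (i + int N) = occ N S i"
  by (simp add: occ_def cyc_def)

lemma occ_of_nat: "j < N \<Longrightarrow> occ N S (int j) \<longleftrightarrow> j \<in> S"
  by (simp add: occ_def)

lemma occ_toggle: "occ N (toggle S j) i = (if cyc N i = j then \<not> occ N S i else occ N S i)"
  by (auto simp: occ_def toggle_def)

lemma occ_toggle_shift: "j < N \<Longrightarrow> occ N (toggle S j) (int j + d) = (occ N S (int j + d) \<noteq> (int N dvd d))"
  by (simp add: occ_toggle cyc_eq_of_nat_iff)

lemma transient_le_boundaries:
  assumes "N > 0" "S \<subseteq> {..<N}"
  shows "of_bool (S \<noteq> {} \<and> S \<noteq> {..<N}) \<le> (\<Sum>j<N. of_bool (occ N S (int j) \<noteq> occ N S (int j + 1)) :: real)"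
proof (cases "S \<noteq> {} \<and> S \<noteq> {..<N}")
  case True
  have "\<exists>j<N. occ N S (int j) \<noteq> occ N S (int j + 1)"
  proof (rule ccontr)
    assume "\<not> ?thesis"
    then have "occ N S (int k) = occ N S 0" if "k < N" for k
      using that by (induction k) (auto simp: add.commute)
    then have "j \<in> S \<longleftrightarrow> 0 \<in> S" if "j < N" for j
      using that assms(1) occ_of_nat[of j N S] occ_of_nat[of 0 N S] by fastforce
    then show False using True assms(2) by blast
  qed
  then obtain j where "j < N" "occ N S (int j) \<noteq> occ N S (int j + 1)" by blast
  then show ?thesis
    using True member_le_sum[of j "{..<N}" "\<lambda>j. of_bool (occ N S (int j) \<noteq> occ N S (int j + 1)) :: real"] by simp
next
  case False
  then have "of_bool (S \<noteq> {} \<and> S \<noteq> {..<N}) = (0 :: real)" by simp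
  then show ?thesis by (simp only:) (rule sum_nonneg; simp)
qed

lemma dvd_small_int: "\<bar>d\<bar> < int N \<Longrightarrow> int N dvd d \<longleftrightarrow> d = 0"
  using zdvd_imp_le[of "int N" "\<bar>d\<bar>"] by auto

lemma inj_on_cyc_shift:
  assumes "2 * h < N"
  shows "inj_on (\<lambda>d. cyc N (i + d)) {d. \<bar>d\<bar> \<le> int h}"
proof (rule inj_onI)
  fix d d' assume "d \<in> {d. \<bar>d\<bar> \<le> int h}" "d' \<in> {d. \<bar>d\<bar> \<le> int h}" "cyc N (i + d) = cyc N (i + d')"
  then show "d = d'"
    using assms cyc_eq_iff[of N "i + d" "i + d'"] dvd_small_int[of "d - d'" N] by auto
qed

lemma mod_neg_small_int:
  fixes d n :: int
  assumes "d \<noteq> 0" "\<bar>d\<bar> < n"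
  shows "(- d) mod n = (if d < 0 then - d else n - d)"
proof -
  have "(- d) mod n = (if d < 0 then - d else n - d) mod n"
    by (simp add: mod_diff_left_eq[symmetric])
  also have "\<dots> = (if d < 0 then - d else n - d)"
    using assms by (intro mod_pos_pos_trivial) auto
  finally show ?thesis .
qed

lemma cir_imp_offset:
  assumes "u < N" "j < N" "cir N k j u"
  shows "\<exists>d. d \<noteq> 0 \<and> \<bar>d\<bar> \<le> int (k div 2) \<and> u = cyc N (int j + d)"
proof -
  define D where "D = (int j - int u) mod int N"
  have D: "0 \<le> D" "D < int N" "int N dvd int j - int u - D"
    using assms(1) by (auto simp: D_def mod_eq_dvd_iff[symmetric])
  have "u \<noteq> j" using assms(3) by (simp add: cir_def)
  then have "D \<noteq> 0" using D assms(1,2) dvd_small_int[of "int j - int u" N] by auto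
  have witness: "u = cyc N (int j + d)" if "int N dvd d + D" for d
  proof -
    have "int j + d - int u = (int j - int u - D) + (d + D)" by simp
    then have "int N dvd int j + d - int u" using D(3) that by (metis dvd_add)
    then show ?thesis using cyc_eq_of_nat_iff[OF assms(1)] by metis
  qed
  from assms(3) consider "D \<le> int (k div 2)" | "int N - D \<le> int (k div 2)"
    unfolding cir_def Let_def D_def by blast
  then show ?thesis
  proof cases
    case 1
    then show ?thesis using D \<open>D \<noteq> 0\<close> witness[of "- D"] by (intro exI[of _ "- D"]) simp
  next
    case 2
    then show ?thesis using D witness[of "int N - D"] by (intro exI[of _ "int N - D"]) simp
  qed
qed

lemma cir_offset:
  assumes "2 * (k div 2) < N" "j < N" "d \<noteq> 0" "\<bar>d\<bar> \<le> int (k div 2)"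
  shows "cir N k j (cyc N (int j + d))"
proof -
  define u where "u = cyc N (int j + d)"
  have u: "u < N" using assms by (simp add: u_def cyc_less)
  have "int N dvd int j + d - int u" using cyc_eq_of_nat_iff[OF u] u_def by metis
  then have mod_eq: "(int j - int u) mod int N = (- d) mod int N"
    by (simp add: mod_eq_dvd_iff algebra_simps)
  have small: "\<bar>d\<bar> < int N" using assms by linarith
  then have "u \<noteq> j" using assms(3) dvd_small_int[of d N] \<open>int N dvd int j + d - int u\<close> by auto
  moreover have "(int j - int u) mod int N \<le> int (k div 2) \<or> int N - (int j - int u) mod int N \<le> int (k div 2)"
    unfolding mod_eq mod_neg_small_int[OF assms(3) small] using assms(4) by auto
  ultimately show ?thesis by (simp add: cir_def u_def)
qed

lemma nbrs_cir:
  assumes "2 * (k div 2) < N" "j < N"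
  shows "nbrs N (cir N k) j = (\<lambda>d. cyc N (int j + d)) ` {d. d \<noteq> 0 \<and> \<bar>d\<bar> \<le> int (k div 2)}"
proof (intro set_eqI iffI)
  fix u assume "u \<in> nbrs N (cir N k) j"
  then show "u \<in> (\<lambda>d. cyc N (int j + d)) ` {d. d \<noteq> 0 \<and> \<bar>d\<bar> \<le> int (k div 2)}"
    using cir_imp_offset[OF _ assms(2)] by (fastforce simp: nbrs_def)
next
  fix u assume "u \<in> (\<lambda>d. cyc N (int j + d)) ` {d. d \<noteq> 0 \<and> \<bar>d\<bar> \<le> int (k div 2)}"
  then show "u \<in> nbrs N (cir N k) j"
    using cir_offset[OF assms] assms cyc_less[of N] by (auto simp: nbrs_def)
qed

lemma cir_commute:
  assumes "u < N" "j < N"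
  shows "cir N k u j = cir N k j u"
proof (cases "u = j")
  case False
  have "(int j - int u) mod int N = int N - (int u - int j) mod int N"
    using False assms dvd_small_int[of "int u - int j" N]
    by (simp add: zmod_zminus1_eq_if[of "int u - int j", simplified] mod_eq_0_iff_dvd)
  then show ?thesis unfolding cir_def Let_def by auto
qed simp

lemma mem_nbrs_cir_commute: "u < N \<Longrightarrow> j < N \<Longrightarrow> u \<in> nbrs N (cir N k) j \<longleftrightarrow> j \<in> nbrs N (cir N k) u"
  by (simp add: nbrs_def cir_commute)

lemma sum_nbrs_cir:
  assumes "2 * (k div 2) < N" "j < N"
  shows "(\<Sum>u\<in>nbrs N (cir N k) j. g u) = (\<Sum>d\<in>{d. d \<noteq> 0 \<and> \<bar>d\<bar> \<le> int (k div 2)}. g (cyc N (int j + d)))"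
proof -
  have "inj_on (\<lambda>d. cyc N (int j + d)) {d. d \<noteq> 0 \<and> \<bar>d\<bar> \<le> int (k div 2)}"
    by (rule inj_on_subset[OF inj_on_cyc_shift[OF assms(1)]]) auto
  then show ?thesis unfolding nbrs_cir[OF assms] by (simp add: sum.reindex)
qed

lemma offsets_4: "{d :: int. d \<noteq> 0 \<and> \<bar>d\<bar> \<le> 2} = {-2, -1, 1, 2}"
  by auto

lemma offsets_2: "{d :: int. d \<noteq> 0 \<and> \<bar>d\<bar> \<le> 1} = {-1, 1}"
  by auto

lemma sum_nbrs_cir4:
  assumes "N \<ge> 5" "j < N"
  shows "(\<Sum>u\<in>nbrs N (cir N 4) j. g u)
    = g (cyc N (int j - 2)) + g (cyc N (int j - 1)) + g (cyc N (int j + 1)) + g (cyc N (int j + 2))"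
  using sum_nbrs_cir[of 4 N j g] assms by (simp add: offsets_4 add.assoc)

lemma sum_nbrs_cir2:
  assumes "N \<ge> 3" "j < N"
  shows "(\<Sum>u\<in>nbrs N (cir N 2) j. g u) = g (cyc N (int j - 1)) + g (cyc N (int j + 1))"
  using sum_nbrs_cir[of 2 N j g] assms by (simp add: offsets_2)

lemma card_nbrs_cir4: "N \<ge> 5 \<Longrightarrow> j < N \<Longrightarrow> card (nbrs N (cir N 4) j) = 4"
  using sum_nbrs_cir4[of N j "\<lambda>_. 1 :: nat"] by simp

lemma card_nbrs_cir2: "N \<ge> 3 \<Longrightarrow> j < N \<Longrightarrow> card (nbrs N (cir N 2) j) = 2"
  using sum_nbrs_cir2[of N j "\<lambda>_. 1 :: nat"] by simp

lemma moran_chain_cir: "N \<ge> 5 \<Longrightarrow> moran_chain N (cir N 4) (cir N 2)"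
proof
  fix u assume "N \<ge> 5" "u < N"
  then show "nbrs N (cir N 4) u \<noteq> {}" "nbrs N (cir N 2) u \<noteq> {}"
    using card_nbrs_cir4[of N u] card_nbrs_cir2[of N u] by auto
qed simp

definition window5 :: "(bool \<Rightarrow> bool \<Rightarrow> bool \<Rightarrow> bool \<Rightarrow> bool \<Rightarrow> 'a) \<Rightarrow> (int \<Rightarrow> bool) \<Rightarrow> int \<Rightarrow> 'a" where
  "window5 F x j = F (x (j - 2)) (x (j - 1)) (x j) (x (j + 1)) (x (j + 2))"

definition cir_rate :: "bool \<Rightarrow> bool \<Rightarrow> bool \<Rightarrow> bool \<Rightarrow> bool \<Rightarrow> real" where
  "cir_rate a b c d e =
     (if c then (of_bool (\<not> b) + of_bool (\<not> d)) / 2 else (of_bool a + of_bool b + of_bool d + of_bool e) / 4)"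

lemma flip_rate_cir:
  assumes N: "N \<ge> 5" and j: "j < N"
  shows "flip_rate N (cir N 4) (cir N 2) S j = window5 cir_rate (occ N S) (int j)"
proof -
  have "N \<ge> 3" using N by simp
  let ?D = "\<lambda>u. if u \<in> S then nbrs N (cir N 4) u else nbrs N (cir N 2) u"
  define h :: "nat \<Rightarrow> real" where "h u = (if j \<in> S
    then (if u \<in> nbrs N (cir N 2) j then of_bool (u \<notin> S) / 2 else 0)
    else (if u \<in> nbrs N (cir N 4) j then of_bool (u \<in> S) / 4 else 0))" for u
  have "of_bool ((u \<in> S) \<noteq> (j \<in> S) \<and> j \<in> ?D u) / real (card (?D u)) = h u" if "u < N" for u
    using mem_nbrs_cir_commute[OF that j, of 2] mem_nbrs_cir_commute[OF that j, of 4]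
      card_nbrs_cir4[OF N that] card_nbrs_cir2[of N u] N that
    unfolding h_def by (cases "u \<in> S"; cases "j \<in> S") auto
  then have "flip_rate N (cir N 4) (cir N 2) S j = (\<Sum>u<N. h u)"
    unfolding flip_rate_def offspring_nbrs_def by (intro sum.cong) auto
  also have "\<dots> = (if j \<in> S then (\<Sum>u\<in>nbrs N (cir N 2) j. of_bool (u \<notin> S)) / 2
      else (\<Sum>u\<in>nbrs N (cir N 4) j. of_bool (u \<in> S)) / 4)"
  proof -
    have restrict: "(\<Sum>u<N. if u \<in> nbrs N (cir N k) j then g u else 0) = (\<Sum>u\<in>nbrs N (cir N k) j. g u)"
      for k and g :: "nat \<Rightarrow> real"
      using sum.inter_restrict[of "{..<N}" g "nbrs N (cir N k) j"] nbrs_subset[of N "cir N k" j]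
      by (simp add: Int_absorb1)
    show ?thesis
      unfolding h_def by (cases "j \<in> S") (simp_all only: if_True if_False restrict sum_divide_distrib)
  qed
  also have "\<dots> = window5 cir_rate (occ N S) (int j)"
    using N j unfolding sum_nbrs_cir4[OF N j] sum_nbrs_cir2[OF \<open>N \<ge> 3\<close> j]
    by (simp add: window5_def cir_rate_def occ_def add_divide_distrib)
  finally show ?thesis .
qed

section \<open>Products over windows of three sites\<close>

definition window3 :: "(bool \<Rightarrow> bool \<Rightarrow> bool \<Rightarrow> 'a) \<Rightarrow> (int \<Rightarrow> bool) \<Rightarrow> int \<Rightarrow> 'a" where
  "window3 w x i = w (x i) (x (i + 1)) (x (i + 2))"

definition window_prod :: "(bool \<Rightarrow> bool \<Rightarrow> bool \<Rightarrow> real) \<Rightarrow> nat \<Rightarrow> nat set \<Rightarrow> real" where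
  "window_prod w N S = (\<Prod>i<N. window3 w (occ N S) (int i))"

definition window_ratio ::
  "(bool \<Rightarrow> bool \<Rightarrow> bool \<Rightarrow> real) \<Rightarrow> bool \<Rightarrow> bool \<Rightarrow> bool \<Rightarrow> bool \<Rightarrow> bool \<Rightarrow> real" where
  "window_ratio w a b c d e = w a b (\<not> c) / w a b c * (w b (\<not> c) d / w b c d) * (w (\<not> c) d e / w c d e)"

lemma prod_lessThan_rotate:
  fixes F :: "int \<Rightarrow> 'a::comm_monoid_mult"
  assumes periodic: "\<And>i. F (i + int N) = F i"
  shows "(\<Prod>i<N. F (c + int i)) = (\<Prod>i<N. F (int i))"
proof -
  have shift: "(\<Prod>i<N. F (c + 1 + int i)) = (\<Prod>i<N. F (c + int i))" for c
  proof (cases N)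
    case (Suc n)
    have "(\<Prod>i<N. F (c + int i)) = F c * (\<Prod>i<n. F (c + 1 + int i))"
      unfolding Suc prod.lessThan_Suc_shift by (simp add: add.assoc)
    moreover have "(\<Prod>i<N. F (c + 1 + int i)) = (\<Prod>i<n. F (c + 1 + int i)) * F c"
      using periodic[of c] unfolding Suc prod.lessThan_Suc by (simp add: add.commute add.left_commute)
    ultimately show ?thesis by (simp add: mult.commute)
  qed simp
  show ?thesis
    by (induction c rule: int_induct[where k = 0]) (simp_all add: shift, metis diff_add_cancel shift)
qed

lemma window_prod_split:
  assumes "N \<ge> 3"
  shows "window_prod w N S = window3 w (occ N S) (j - 2) * window3 w (occ N S) (j - 1) * window3 w (occ N S) j
    * (\<Prod>i\<in>{3..<N}. window3 w (occ N S) (j + (int i - 2)))"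
proof -
  have periodic: "occ N S (i + int N + k) = occ N S (i + k)" for i k
    using occ_add_period[of N S "i + k"] by (simp add: algebra_simps)
  have "window_prod w N S = (\<Prod>i<N. window3 w (occ N S) (j - 2 + int i))"
    unfolding window_prod_def window3_def
    by (rule prod_lessThan_rotate[symmetric]) (simp add: periodic occ_add_period)
  also have "\<dots> = (\<Prod>i\<in>{0, 1, 2}. window3 w (occ N S) (j - 2 + int i))
      * (\<Prod>i\<in>{3..<N}. window3 w (occ N S) (j - 2 + int i))"
  proof -
    have "{..<N} = {0, 1, 2} \<union> {3..<N}" using assms by auto
    then show ?thesis by (simp only:) (rule prod.union_disjoint; auto)
  qed
  finally show ?thesis by (simp add: algebra_simps)
qed

text \<open>Only the three windows containing j change; rotating the product brings them to the front.\<close>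

lemma window_prod_toggle:
  assumes N: "N \<ge> 3" and j: "j < N" and nonzero: "\<And>a b c. w a b c \<noteq> 0"
  shows "window_prod w N (toggle S j) = window_prod w N S * window5 (window_ratio w) (occ N S) (int j)"
proof -
  have far: "occ N (toggle S j) (int j + d) = occ N S (int j + d)" if "1 \<le> d" "d < int N" for d
    using occ_toggle_shift[OF j] dvd_small_int[of d N] that by auto
  have near: "occ N (toggle S j) (int j + d) = occ N S (int j + d)" if "d \<in> {-2, -1, 1, 2}" for d
    using occ_toggle_shift[OF j] dvd_small_int[of d N] that N by auto
  let ?x = "occ N S" and ?y = "occ N (toggle S j)"
  have changed: "window3 w ?y (int j - 2) * window3 w ?y (int j - 1) * window3 w ?y (int j)
      = window3 w ?x (int j - 2) * window3 w ?x (int j - 1) * window3 w ?x (int j)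
        * window5 (window_ratio w) ?x (int j)"
    using near[of "-2"] near[of "-1"] near[of 1] near[of 2] occ_toggle_shift[OF j, of S 0] nonzero
    unfolding window3_def window5_def window_ratio_def by (simp add: algebra_simps)
  have unchanged: "(\<Prod>i\<in>{3..<N}. window3 w ?y (int j + (int i - 2))) = (\<Prod>i\<in>{3..<N}. window3 w ?x (int j + (int i - 2)))"
  proof (rule prod.cong[OF refl])
    fix i assume "i \<in> {3..<N}"
    then show "window3 w ?y (int j + (int i - 2)) = window3 w ?x (int j + (int i - 2))"
      using far[of "int i - 2"] far[of "int i - 1"] far[of "int i"] unfolding window3_def by (simp add: algebra_simps)
  qed
  show ?thesis
    unfolding window_prod_split[OF N, of w _ "int j"] changed unchanged by (simp only: mult_ac)
qed

lemma window_prod_empty: "window_prod w N {} = w False False False ^ N"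
  by (simp add: window_prod_def window3_def occ_def)

lemma window_prod_full: "N > 0 \<Longrightarrow> window_prod w N {..<N} = w True True True ^ N"
  by (simp add: window_prod_def window3_def occ_def cyc_less)

lemma window_prod_singleton:
  assumes "N \<ge> 3" "v < N" "\<And>a b c. w a b c \<noteq> 0" "w False False False = 1"
  shows "window_prod w N {v} = w False False True * w False True False * w True False False"
  using window_prod_toggle[OF assms(1-3), where S = "{}"] assms(4)
  by (simp add: toggle_def window_prod_empty window5_def window_ratio_def occ_def)

lemma window_prod_nonneg: "(\<And>a b c. 0 \<le> w a b c) \<Longrightarrow> 0 \<le> window_prod w N S"
  unfolding window_prod_def window3_def by (intro prod_nonneg) simp

lemma window_prod_le: "(\<And>a b c. 0 \<le> w a b c \<and> w a b c \<le> B) \<Longrightarrow> window_prod w N S \<le> B ^ N"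
  unfolding window_prod_def window3_def using prod_mono[of "{..<N}" _ "\<lambda>_. B"] by simp

lemma window_prod_ge_1: "(\<And>a b c. 1 \<le> w a b c) \<Longrightarrow> 1 \<le> window_prod w N S"
  unfolding window_prod_def window3_def by (intro prod_ge_1) simp

section \<open>Bounds for Cir^4_N against Cir^2_N\<close>

definition window_drift ::
  "(bool \<Rightarrow> bool \<Rightarrow> bool \<Rightarrow> real) \<Rightarrow> bool \<Rightarrow> bool \<Rightarrow> bool \<Rightarrow> bool \<Rightarrow> bool \<Rightarrow> real" where
  "window_drift w a b c d e = cir_rate a b c d e * (window_ratio w a b c d e - 1)"

lemma expectation_step_window_prod:
  assumes N: "N \<ge> 5" and nonzero: "\<And>a b c. w a b c \<noteq> 0"
  shows "measure_pmf.expectation (moran_step N (cir N 4) (cir N 2) S) (window_prod w N)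
    = window_prod w N S * (1 + (\<Sum>j<N. window5 (window_drift w) (occ N S) (int j)) / N)"
proof -
  have "flip_rate N (cir N 4) (cir N 2) S j * (window_prod w N (toggle S j) - window_prod w N S)
      = window_prod w N S * window5 (window_drift w) (occ N S) (int j)" if "j < N" for j
    using N that nonzero
    by (simp add: flip_rate_cir window_prod_toggle window5_def window_drift_def algebra_simps)
  then show ?thesis
    using moran_chain.expectation_step[OF moran_chain_cir[OF N], of S "window_prod w N"]
    by (simp add: sum_distrib_left distrib_left add_divide_distrib)
qed

lemma sum_window5_telescope:
  fixes T :: "bool \<Rightarrow> bool \<Rightarrow> bool \<Rightarrow> bool \<Rightarrow> bool \<Rightarrow> real"
  assumes periodic: "\<And>i. x (i + int N) = x i"
    and bound: "\<And>a b c d e. T a b c d e \<le> phi b c d e - phi a b c d"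
  shows "(\<Sum>j<N. window5 T x (int j)) \<le> 0"
proof -
  define \<Psi> where "\<Psi> j = phi (x (int j - 2)) (x (int j - 1)) (x (int j)) (x (int j + 1))" for j
  have "(\<Sum>j<N. window5 T x (int j)) \<le> (\<Sum>j<N. \<Psi> (Suc j) - \<Psi> j)"
    using bound by (intro sum_mono) (simp add: window5_def \<Psi>_def algebra_simps)
  also have "\<dots> = \<Psi> N - \<Psi> 0"
    by (rule sum_lessThan_telescope)
  also have "\<Psi> N = \<Psi> 0"
    using periodic[of "-2"] periodic[of "-1"] periodic[of 0] periodic[of 1] by (simp add: \<Psi>_def add.commute)
  finally show ?thesis by simp
qed

definition w_lo :: "bool \<Rightarrow> bool \<Rightarrow> bool \<Rightarrow> real" where
  "w_lo a b c = (if a then (if b then (if c then 78/100 else 1) else (if c then 93/100 else 1))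
     else (if b then (if c then 73/100 else 93/100) else (if c then 92/100 else 1)))"
definition w_up :: "bool \<Rightarrow> bool \<Rightarrow> bool \<Rightarrow> real" where
  "w_up a b c = (if a then (if b then 6/10 else 1) else (if b then 7/10 else 1))"
definition w_lyap :: "bool \<Rightarrow> bool \<Rightarrow> bool \<Rightarrow> real" where
  "w_lyap a b c = (if a then 3 else 1)"

definition phi_lo :: "bool \<Rightarrow> bool \<Rightarrow> bool \<Rightarrow> bool \<Rightarrow> real" where
  "phi_lo a b c d =
     (if a then
        (if b then (if c then 11/78 else (if d then 7/25 else 11/39))
         else (if c then (if d then 0 else 67/1000) else (if d then 7/50 else 671/3900)))
      else
        (if b then (if c then (if d then 11/78 else 7/50) else (if d then 53/250 else 9/40))
         else (if c then (if d then 0 else 111/2000) else (if d then 7836323/71760000 else 7/50))))"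

definition phi_up :: "bool \<Rightarrow> bool \<Rightarrow> bool \<Rightarrow> bool \<Rightarrow> real" where
  "phi_up a b c d =
     (if a then
        (if b then (if c then 4/15 else 0)
         else (if c then (if d then 17/35 else 51/140) else (if d then 3/10 else 1/5)))
      else
        (if b then (if c then 4/15 else 1/14)
         else (if c then (if d then 3/5 else 1/2) else (if d then 7/20 else 11/40))))"

definition phi_lyap :: "bool \<Rightarrow> bool \<Rightarrow> bool \<Rightarrow> bool \<Rightarrow> real" where
  "phi_lyap a b c d =
     (if a then (if b then (if c then 1/3 else 5/6) else (if c then 0 else (if d then 0 else 1/3)))
      else (if b then (if c then 1/3 else 5/6) else 0))"

lemma window_drift_lo_telescopes: "window_drift w_lo a b c d e \<le> phi_lo b c d e - phi_lo a b c d"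
  by (cases a; cases b; cases c; cases d; cases e) (simp_all add: window_drift_def window_ratio_def cir_rate_def w_lo_def phi_lo_def)

lemma window_drift_up_telescopes: "- window_drift w_up a b c d e \<le> phi_up b c d e - phi_up a b c d"
  by (cases a; cases b; cases c; cases d; cases e) (simp_all add: window_drift_def window_ratio_def cir_rate_def w_up_def phi_up_def)

lemma window_drift_lyap_telescopes: "of_bool (c \<noteq> d) / 6 - window_drift w_lyap a b c d e \<le> phi_lyap b c d e - phi_lyap a b c d"
  by (cases a; cases b; cases c; cases d; cases e) (simp_all add: window_drift_def window_ratio_def cir_rate_def w_lyap_def phi_lyap_def)

lemma w_lo_pos: "0 < w_lo a b c"
  by (simp add: w_lo_def)

lemma w_up_pos: "0 < w_up a b c"
  by (simp add: w_up_def)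

lemma w_lyap_bounds: "1 \<le> w_lyap a b c" "w_lyap a b c \<le> 3"
  by (simp_all add: w_lyap_def)

context
  fixes N :: nat assumes N: "N \<ge> 5"
begin

interpretation cir: moran_chain N "cir N 4" "cir N 2"
  by (rule moran_chain_cir[OF N])

lemma window_prod_lo_supermartingale:
  "measure_pmf.expectation (cir.step S) (window_prod w_lo N) \<le> window_prod w_lo N S"
proof -
  have "(\<Sum>j<N. window5 (window_drift w_lo) (occ N S) (int j)) \<le> 0"
    by (rule sum_window5_telescope[where x = "occ N S", OF occ_add_period window_drift_lo_telescopes])
  moreover have "0 \<le> window_prod w_lo N S"
    using w_lo_pos by (intro window_prod_nonneg less_imp_le)
  ultimately show ?thesis
    using N w_lo_pos
    by (simp add: expectation_step_window_prod less_imp_neq[symmetric] distrib_left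
        mult_nonneg_nonpos divide_nonpos_nonneg)
qed

lemma window_prod_up_submartingale:
  "window_prod w_up N S \<le> measure_pmf.expectation (cir.step S) (window_prod w_up N)"
proof -
  have "(\<Sum>j<N. window5 (\<lambda>a b c d e. - window_drift w_up a b c d e) (occ N S) (int j)) \<le> 0"
    by (rule sum_window5_telescope[where x = "occ N S", OF occ_add_period window_drift_up_telescopes])
  then have "0 \<le> (\<Sum>j<N. window5 (window_drift w_up) (occ N S) (int j))"
    by (simp add: window5_def sum_negf)
  moreover have "0 \<le> window_prod w_up N S"
    using w_up_pos by (intro window_prod_nonneg less_imp_le)
  ultimately show ?thesis
    using N w_up_pos by (simp add: expectation_step_window_prod less_imp_neq[symmetric] distrib_left)
qed

lemma window_prod_lyap_drift:
  assumes S: "S \<subseteq> {..<N}"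
  shows "window_prod w_lyap N S + 1 / (6 * N) * of_bool (S \<noteq> {} \<and> S \<noteq> {..<N})
    \<le> measure_pmf.expectation (cir.step S) (window_prod w_lyap N)"
proof -
  define s where "s = (\<Sum>j<N. window5 (window_drift w_lyap) (occ N S) (int j))"
  have "(\<Sum>j<N. window5 (\<lambda>a b c d e. of_bool (c \<noteq> d) / 6 - window_drift w_lyap a b c d e) (occ N S) (int j)) \<le> 0"
    by (rule sum_window5_telescope[where x = "occ N S", OF occ_add_period window_drift_lyap_telescopes])
  moreover have "(\<Sum>j<N. window5 (\<lambda>a b c d e. of_bool (c \<noteq> d) / 6 - window_drift w_lyap a b c d e) (occ N S) (int j))
      = (\<Sum>j<N. of_bool (occ N S (int j) \<noteq> occ N S (int j + 1))) / 6 - s"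
    by (simp add: s_def window5_def sum_subtractf sum_divide_distrib del: sum_of_bool_eq)
  ultimately have "(\<Sum>j<N. of_bool (occ N S (int j) \<noteq> occ N S (int j + 1))) / 6 \<le> s"
    by linarith
  moreover have "0 \<le> (\<Sum>j<N. of_bool (occ N S (int j) \<noteq> occ N S (int j + 1)) :: real)"
    by (intro sum_nonneg) simp
  ultimately have s_nonneg: "0 \<le> s" and transient_le: "of_bool (S \<noteq> {} \<and> S \<noteq> {..<N}) / 6 \<le> s"
    using transient_le_boundaries[OF _ S] N by (auto simp: divide_right_mono order_trans)
  have "s \<le> window_prod w_lyap N S * s"
    using w_lyap_bounds s_nonneg mult_right_mono[OF window_prod_ge_1, of w_lyap s N S] by simp
  then have "of_bool (S \<noteq> {} \<and> S \<noteq> {..<N}) / 6 / N \<le> window_prod w_lyap N S * s / N"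
    using transient_le by (intro divide_right_mono) simp_all
  then have "1 / (6 * N) * of_bool (S \<noteq> {} \<and> S \<noteq> {..<N}) \<le> window_prod w_lyap N S * s / N"
    by (simp add: mult.commute)
  moreover have "measure_pmf.expectation (cir.step S) (window_prod w_lyap N)
      = window_prod w_lyap N S + window_prod w_lyap N S * s / N"
    unfolding s_def by (subst expectation_step_window_prod[OF N]) (simp_all add: w_lyap_def distrib_left)
  ultimately show ?thesis by simp
qed

lemma fixation_prob_from_cir_le:
  assumes v: "v < N"
  shows "fixation_prob_from N (cir N 4) (cir N 2) {v} \<le> (3/10) / (1 - (6/10) ^ N)"
proof -
  have single: "window_prod w_up N {v} = 7/10"
    using N v by (subst window_prod_singleton) (simp_all add: w_up_def)
  have full: "window_prod w_up N {..<N} = (6/10) ^ N"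
    using N by (simp add: window_prod_full w_up_def)
  have "(6/10 :: real) ^ N < 1" using N by (simp add: power_less_one_iff)
  moreover have "window_prod w_up N S \<le> 1" for S
    using window_prod_le[of w_up 1 N S] by (simp add: w_up_def)
  ultimately have "fixation_prob_from N (cir N 4) (cir N 2) {v}
      \<le> (1 - window_prod w_up N {v}) / (1 - window_prod w_up N {..<N})"
    using v window_prod_up_submartingale by (intro cir.fixation_prob_from_le) (simp_all add: full)
  then show ?thesis unfolding single full by simp
qed

lemma fixation_prob_from_cir_ge:
  assumes v: "v < N"
  shows "1 - (92/100) * (93/100) \<le> fixation_prob_from N (cir N 4) (cir N 2) {v}"
proof -
  have S0: "{v} \<subseteq> {..<N}" using v by simp
  have "0 \<le> window_prod w_lyap N S \<and> window_prod w_lyap N S \<le> 3 ^ N" for S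
  proof
    show "0 \<le> window_prod w_lyap N S"
      using window_prod_ge_1[of w_lyap N S] w_lyap_bounds(1) by fastforce
    show "window_prod w_lyap N S \<le> 3 ^ N"
      using w_lyap_bounds by (intro window_prod_le) (meson order.trans zero_le_one)
  qed
  then have absorbed: "\<exists>n. cir.expect n {v} cir.transient < \<epsilon>" if "\<epsilon> > 0" for \<epsilon>
    using N that by (intro cir.transient_prob_vanishes[OF S0 window_prod_lyap_drift, of "3 ^ N"]) auto
  have "window_prod w_lo N {v} = (92/100) * (93/100)"
    using N v w_lo_pos by (subst window_prod_singleton) (auto simp: w_lo_def less_imp_neq[symmetric])
  moreover have "window_prod w_lo N {} = 1"
    by (simp add: window_prod_empty w_lo_def)
  ultimately show ?thesis
    using cir.fixation_prob_from_ge[OF S0 window_prod_lo_supermartingale _ _ absorbed] w_lo_pos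
    by (simp add: window_prod_nonneg less_imp_le)
qed

end

lemma fixation_prob_cir_bounds:
  assumes N: "N \<ge> 10"
  shows "14/100 \<le> fixation_prob N (cir N 4) (cir N 2) \<and> fixation_prob N (cir N 4) (cir N 2) \<le> 31/100"
proof -
  let ?f = "\<lambda>v. fixation_prob_from N (cir N 4) (cir N 2) {v}"
  have "(6/10 :: real) ^ N \<le> (6/10) ^ 10"
    using N by (intro power_decreasing) auto
  also have "\<dots> \<le> 1/100" by (simp add: power_divide)
  finally have "(3/10) / (1 - (6/10 :: real) ^ N) \<le> 31/100"
    by (simp add: pos_divide_le_eq)
  then have "14/100 \<le> ?f v \<and> ?f v \<le> 31/100" if "v < N" for v
    using fixation_prob_from_cir_le[OF _ that] fixation_prob_from_cir_ge[OF _ that] N by fastforce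
  then have "real N * (14/100) \<le> sum ?f {..<N} \<and> sum ?f {..<N} \<le> real N * (31/100)"
    using sum_bounded_below[of "{..<N}" "14/100" ?f] sum_bounded_above[of "{..<N}" ?f "31/100"] by simp
  then show ?thesis
    using N by (simp add: fixation_prob_def field_simps)
qed

theorem theorem3:
  shows "ereal 0.138 < liminf (\<lambda>N. ereal (fixation_prob N (cir N 4) (cir N 2)))
      \<and> liminf (\<lambda>N. ereal (fixation_prob N (cir N 4) (cir N 2)))
          \<le> limsup (\<lambda>N. ereal (fixation_prob N (cir N 4) (cir N 2)))
      \<and> limsup (\<lambda>N. ereal (fixation_prob N (cir N 4) (cir N 2))) < ereal 0.34"
proof (intro conjI)
  have "eventually (\<lambda>N. 14/100 \<le> fixation_prob N (cir N 4) (cir N 2)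
      \<and> fixation_prob N (cir N 4) (cir N 2) \<le> 31/100) sequentially"
    unfolding eventually_sequentially using fixation_prob_cir_bounds by blast
  then have lower: "eventually (\<lambda>N. ereal (14/100) \<le> ereal (fixation_prob N (cir N 4) (cir N 2))) sequentially"
    and upper: "eventually (\<lambda>N. ereal (fixation_prob N (cir N 4) (cir N 2)) \<le> ereal (31/100)) sequentially"
    by (auto elim: eventually_mono)
  have "ereal 0.138 < ereal (14/100)" by simp
  also have "\<dots> \<le> liminf (\<lambda>N. ereal (fixation_prob N (cir N 4) (cir N 2)))"
    by (rule Liminf_bounded[OF lower])
  finally show "ereal 0.138 < liminf (\<lambda>N. ereal (fixation_prob N (cir N 4) (cir N 2)))" .
  show "liminf (\<lambda>N. ereal (fixation_prob N (cir N 4) (cir N 2)))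
      \<le> limsup (\<lambda>N. ereal (fixation_prob N (cir N 4) (cir N 2)))"
    by (rule Liminf_le_Limsup) simp
  have "limsup (\<lambda>N. ereal (fixation_prob N (cir N 4) (cir N 2))) \<le> ereal (31/100)"
    by (rule Limsup_bounded[OF upper])
  also have "\<dots> < ereal 0.34" by simp
  finally show "limsup (\<lambda>N. ereal (fixation_prob N (cir N 4) (cir N 2))) < ereal 0.34" .
qed

end
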